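(* Let $\{x_i,v_i\}_{i\in[N]}$ be the global solution of the delayed Cucker–Smale system described in the context, let $\beta>0$ and \[ G(t):=d_v(t)+\beta\int_{\max\{0,t-2\tau\}}^t e^{-(t-s)}\int_s^t\max_{i\in[N]}|\dot v_i(r)|\,\mathrm dr\,\mathrm ds,\qquad t\ge0. \] Let $K$ be the smallest integer such that $K\sigma\ge2\tau$. Then \[ G(t)\le\mathcal{Z}^K_\sigma\Delta^0_v\qquad\text{for all }t\in[0,2\tau], \] where $\mathcal{Z}^K_\sigma:=Z^K_\sigma+Z^{K-1}_\sigma\beta\big(1-(1+2\tau)e^{-2\tau}\big)$.
   Context: Let $N\ge2$, $d\ge1$ be integers, $[N]=\{1,\dots,N\}$, $0\le\sigma\le\tau$. Let $\psi:[0,\infty)\to[0,\infty)$ be continuous, nonincreasing, positive everywhere, with $\sup\psi\le1$. Given $x_i^0\in C^1([-\tau,0],\mathbb{R}^d)$, $v_i^0\in C([-\tau,0],\mathbb{R}^d)$ with $\frac{\mathrm d}{\mathrm dt}x_i^0=v_i^0$, $\{x_i,v_i\}$ is the global solution of $\dot x_i(t)=v_i(t)$, $\dot v_i(t)=\sum_{j\ne i}a_{ij}(t)(v_j(t-\tau)-v_i(t-\sigma))$ for $t>0$, with $a_{ij}(t)=\frac1{N-1}\psi(|x_i(t-\sigma)-x_j(t-\tau)|)$, and $x_i=x_i^0$, $v_i=v_i^0$ on $[-\tau,0]$ ($v_i$ continuously differentiable on $[0,\infty)$). $d_v(t):=\max_{i,j}|v_i(t)-v_j(t)|$; $\Delta^0_v:=\max_{i,j}\max_{s,t\in[-\tau,0]}|v_i^0(s)-v_j^0(t)|$.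 For $k\ge0$, \[ Z^k_\sigma:=\frac{1}{2\sqrt{\sigma(1+\sigma)}}\Big[\big((1+\sigma)+\sqrt{\sigma(1+\sigma)}\big)^{k+1}-\big((1+\sigma)-\sqrt{\sigma(1+\sigma)}\big)^{k+1}\Big], \] a polynomial in $\sigma$; equivalently $Z^0_\sigma=1$, $Z^k_\sigma=1+(1+\sigma)Z^{k-1}_\sigma+\sigma\sum_{m=0}^{k-1}Z^m_\sigma$ for $k\ge1$. *)

theory Defs
  imports "HOL-Analysis.Analysis"
begin

text \<open>The numbers Z^k_sigma, via the recursion given in the paper
  (equivalent to the closed form, and well defined also for sigma = 0).\<close>
fun Zs :: "real \<Rightarrow> nat \<Rightarrow> real" where
  "Zs \<sigma> 0 = 1"
| "Zs \<sigma> (Suc k) = 1 + (1 + \<sigma>) * Zs \<sigma> k + \<sigma> * (\<Sum>m\<le>k. Zs \<sigma> m)"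

definition dv :: "nat \<Rightarrow> (nat \<Rightarrow> real \<Rightarrow> real^'d) \<Rightarrow> real \<Rightarrow> real" where
  "dv N v t = Max {norm (v i t - v j t) | i j. i \<in> {1..N} \<and> j \<in> {1..N}}"

definition Delta0 :: "nat \<Rightarrow> real \<Rightarrow> (nat \<Rightarrow> real \<Rightarrow> real^'d) \<Rightarrow> real" where
  "Delta0 N \<tau> v0 = Sup {norm (v0 i s - v0 j t) | i j s t.
      i \<in> {1..N} \<and> j \<in> {1..N} \<and> s \<in> {-\<tau>..0} \<and> t \<in> {-\<tau>..0}}"

definition aw :: "nat \<Rightarrow> (real \<Rightarrow> real) \<Rightarrow> real \<Rightarrow> real \<Rightarrow> (nat \<Rightarrow> real \<Rightarrow> real^'d)
    \<Rightarrow> nat \<Rightarrow> nat \<Rightarrow> real \<Rightarrow> real" where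
  "aw N \<psi> \<sigma> \<tau> x i j t = (1 / (real N - 1)) * \<psi> (norm (x i (t - \<sigma>) - x j (t - \<tau>)))"

definition maxacc :: "nat \<Rightarrow> (nat \<Rightarrow> real \<Rightarrow> real^'d) \<Rightarrow> real \<Rightarrow> real" where
  "maxacc N v r = Max ((\<lambda>i. norm (vector_derivative (v i) (at r within {0..}))) ` {1..N})"

definition Gf :: "nat \<Rightarrow> real \<Rightarrow> real \<Rightarrow> (nat \<Rightarrow> real \<Rightarrow> real^'d) \<Rightarrow> real \<Rightarrow> real" where
  "Gf N \<tau> \<beta> v t = dv N v t + \<beta> * integral {max 0 (t - 2*\<tau>)..t}
      (\<lambda>s. exp (-(t - s)) * integral {s..t} (\<lambda>r. maxacc N v r))"

end

theory Submission
  imports Defs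
begin

(* On a window [k sigma, (k+1) sigma] the velocity equation only involves velocities at times up
   to k sigma, through velocity differences combined with nonnegative weights of total mass at
   most 1. Hence if all differences v_i(s) - v_j(r) with s, r in [-tau, k sigma] are at most B,
   the accelerations on the window are at most B, each velocity moves by at most sigma B, and the
   triangle inequality bounds the differences on [-tau, (k+1) sigma] by (1 + 2 sigma) B. As
   K sigma >= 2 tau, K such steps from Delta^0_v bound d_v on [0, 2 tau] by
   (1 + 2 sigma)^K Delta^0_v <= Z^K_sigma Delta^0_v and the accelerations by
   (1 + 2 sigma)^(K-1) Delta^0_v <= Z^(K-1)_sigma Delta^0_v. The inner integral of G is then at
   most this acceleration bound times (t - s), and the integral of e^(-(t-s)) (t - s) over a
   window of length at most 2 tau is at most 1 - (1 + 2 tau) e^(-2 tau). *)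

definition spread_le ::
    "'i set \<Rightarrow> ('i \<Rightarrow> real \<Rightarrow> 'a::real_normed_vector) \<Rightarrow> real set \<Rightarrow> real \<Rightarrow> bool"
  where "spread_le I v S B \<longleftrightarrow> (\<forall>i\<in>I. \<forall>j\<in>I. \<forall>s\<in>S. \<forall>r\<in>S. norm (v i s - v j r) \<le> B)"

lemma spread_le_nonneg: "spread_le I v S B \<Longrightarrow> i \<in> I \<Longrightarrow> s \<in> S \<Longrightarrow> 0 \<le> B"
  unfolding spread_le_def by (metis diff_self norm_zero)

lemma spread_le_extend:
  fixes v :: "'i \<Rightarrow> real \<Rightarrow> 'a::real_normed_vector"
  assumes spread: "spread_le I v {a..T} B" and "a \<le> T" "0 \<le> \<sigma>"
    and move: "\<And>i s. i \<in> I \<Longrightarrow> T < s \<Longrightarrow> s \<le> T + \<sigma> \<Longrightarrow> norm (v i s - v i T) \<le> \<sigma> * B"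
  shows "spread_le I v {a..T + \<sigma>} ((1 + 2*\<sigma>) * B)"
  unfolding spread_le_def
proof (intro ballI)
  fix i j s r assume ij: "i \<in> I" "j \<in> I" and sr: "s \<in> {a..T + \<sigma>}" "r \<in> {a..T + \<sigma>}"
  have "0 \<le> B"
    using spread ij \<open>a \<le> T\<close> by (intro spread_le_nonneg) auto
  have clamp: "norm (v k u - v k (min u T)) \<le> \<sigma> * B" if "k \<in> I" "u \<le> T + \<sigma>" for k u
    using move[OF that(1) _ that(2)] \<open>0 \<le> B\<close> \<open>0 \<le> \<sigma>\<close> by (cases "u \<le> T") auto
  have "norm (v i (min s T) - v j (min r T)) \<le> B"
    using spread ij sr \<open>a \<le> T\<close> unfolding spread_le_def by auto
  then have "norm (v i s - v j r) \<le> \<sigma> * B + (B + \<sigma> * B)"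
    using clamp[OF ij(1)] clamp[OF ij(2)] sr
    by (intro norm_diff_triangle_le[of _ "v i (min s T)"] norm_diff_triangle_le[of _ "v j (min r T)"])
       (auto simp: norm_minus_commute)
  then show "norm (v i s - v j r) \<le> (1 + 2*\<sigma>) * B"
    by (simp add: algebra_simps)
qed

lemma spread_le_growth:
  fixes v :: "'i \<Rightarrow> real \<Rightarrow> 'a::real_normed_vector"
  assumes "0 \<le> \<sigma>" "0 \<le> \<tau>"
    and init: "spread_le I v {-\<tau>..0} \<Delta>"
    and cont: "\<And>i. i \<in> I \<Longrightarrow> continuous_on {0..} (v i)"
    and deriv: "\<And>i t. i \<in> I \<Longrightarrow> 0 < t \<Longrightarrow> (v i has_vector_derivative F i t) (at t)"
    and force_le: "\<And>T B i t. 0 \<le> T \<Longrightarrow> spread_le I v {-\<tau>..T} B \<Longrightarrow> i \<in> I \<Longrightarrow>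
      0 < t \<Longrightarrow> t \<le> T + \<sigma> \<Longrightarrow> norm (F i t) \<le> B"
  shows "spread_le I v {-\<tau>..real k * \<sigma>} ((1 + 2*\<sigma>) ^ k * \<Delta>)"
proof (induction k)
  case 0
  then show ?case
    using init by simp
next
  case (Suc k)
  define T where "T = real k * \<sigma>"
  define B where "B = (1 + 2*\<sigma>) ^ k * \<Delta>"
  have "0 \<le> T"
    using assms(1) unfolding T_def by simp
  have spread: "spread_le I v {-\<tau>..T} B"
    using Suc.IH unfolding T_def B_def .
  have move: "norm (v i s - v i T) \<le> \<sigma> * B" if i: "i \<in> I" and s: "T < s" "s \<le> T + \<sigma>" for i s
  proof -
    have "0 \<le> B"
      using spread i \<open>0 \<le> T\<close> assms(2) by (intro spread_le_nonneg) auto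
    have "norm (v i s - v i T) \<le> B * s - B * T"
    proof (rule differentiable_bound_general[OF \<open>T < s\<close>])
      show "continuous_on {T..s} (v i)"
        using cont[OF i] by (rule continuous_on_subset) (use \<open>0 \<le> T\<close> in auto)
      show "continuous_on {T..s} ((*) B)"
        by (intro continuous_intros)
      fix y assume y: "T < y" "y < s"
      then show "(v i has_vector_derivative F i y) (at y)"
        using deriv[OF i] \<open>0 \<le> T\<close> by simp
      show "((*) B has_vector_derivative B) (at y)"
        unfolding has_real_derivative_iff_has_vector_derivative[symmetric]
        by (auto intro!: derivative_eq_intros)
      show "norm (F i y) \<le> B"
        using force_le[OF \<open>0 \<le> T\<close> spread i] y s \<open>0 \<le> T\<close> by simp
    qed
    also have "\<dots> \<le> \<sigma> * B"
      using \<open>0 \<le> B\<close> s by (simp add: mult_left_mono right_diff_distrib[symmetric] mult.commute)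
    finally show ?thesis .
  qed
  have "spread_le I v {-\<tau>..T + \<sigma>} ((1 + 2*\<sigma>) * B)"
    using spread_le_extend[OF spread _ \<open>0 \<le> \<sigma>\<close> move] \<open>0 \<le> T\<close> assms(2) by simp
  then show ?case
    unfolding T_def B_def by (simp add: algebra_simps)
qed

lemma norm_sum_scaleR_le:
  fixes w :: "'i \<Rightarrow> 'a::real_normed_vector"
  assumes "\<And>j. j \<in> A \<Longrightarrow> 0 \<le> c j" "sum c A \<le> 1"
    and "\<And>j. j \<in> A \<Longrightarrow> norm (w j) \<le> B" "0 \<le> B"
  shows "norm (\<Sum>j\<in>A. c j *\<^sub>R w j) \<le> B"
proof -
  have "norm (\<Sum>j\<in>A. c j *\<^sub>R w j) \<le> (\<Sum>j\<in>A. c j * B)"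
    using assms(1,3) by (intro order_trans[OF norm_sum] sum_mono) (simp add: mult_left_mono)
  also have "\<dots> = sum c A * B"
    by (simp add: sum_distrib_right)
  also have "\<dots> \<le> B"
    using mult_right_mono[OF assms(2,4)] by simp
  finally show ?thesis .
qed

lemma spread_le_Delta0:
  fixes v0 :: "nat \<Rightarrow> real \<Rightarrow> real^'d"
  assumes "\<And>i. i \<in> {1..N} \<Longrightarrow> continuous_on {-\<tau>..0} (v0 i)"
  shows "spread_le {1..N} v0 {-\<tau>..0} (Delta0 N \<tau> v0)"
proof -
  have "bounded (\<Union>i\<in>{1..N}. v0 i ` {-\<tau>..0})"
    using assms by (intro bounded_UN ballI compact_imp_bounded compact_continuous_image) auto
  then obtain M where M: "\<And>i s. i \<in> {1..N} \<Longrightarrow> s \<in> {-\<tau>..0} \<Longrightarrow> norm (v0 i s) \<le> M"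
    unfolding bounded_iff by blast
  have "bdd_above {norm (v0 i s - v0 j t) | i j s t.
      i \<in> {1..N} \<and> j \<in> {1..N} \<and> s \<in> {-\<tau>..0} \<and> t \<in> {-\<tau>..0}}"
  proof (rule bdd_aboveI)
    fix y assume "y \<in> {norm (v0 i s - v0 j t) | i j s t.
      i \<in> {1..N} \<and> j \<in> {1..N} \<and> s \<in> {-\<tau>..0} \<and> t \<in> {-\<tau>..0}}"
    then obtain i j s t where y: "y = norm (v0 i s - v0 j t)"
      and "i \<in> {1..N}" "j \<in> {1..N}" "s \<in> {-\<tau>..0}" "t \<in> {-\<tau>..0}"
      by blast
    then have "norm (v0 i s) \<le> M" "norm (v0 j t) \<le> M"
      using M by auto
    then show "y \<le> M + M"
      using norm_triangle_ineq4[of "v0 i s" "v0 j t"] unfolding y by linarith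
  qed
  then show ?thesis
    unfolding spread_le_def Delta0_def by (blast intro: cSup_upper)
qed

lemma dv_le_spread:
  assumes "spread_le {1..N} v S B" "t \<in> S" "1 \<le> N"
  shows "dv N v t \<le> B"
proof -
  have "{norm (v i t - v j t) | i j. i \<in> {1..N} \<and> j \<in> {1..N}}
      = (\<lambda>(i, j). norm (v i t - v j t)) ` ({1..N} \<times> {1..N})"
    by auto blast
  then show ?thesis
    using assms unfolding dv_def spread_le_def by (simp add: Max_le_iff)
qed

lemma power_le_Zs:
  fixes \<sigma> :: real
  assumes "0 \<le> \<sigma>"
  shows "(1 + 2*\<sigma>) ^ k \<le> Zs \<sigma> k"
proof (induction k rule: less_induct)
  case (less k)
  show ?case
  proof (cases k)
    case 0
    then show ?thesis by simp
  next
    case (Suc n)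
    have IH: "(1 + 2*\<sigma>) ^ m \<le> Zs \<sigma> m" if "m \<le> n" for m
      using less Suc that by simp
    have earlier_nonneg: "0 \<le> (\<Sum>m<n. Zs \<sigma> m)"
    proof (intro sum_nonneg)
      fix m assume "m \<in> {..<n}"
      then have "(1 + 2*\<sigma>) ^ m \<le> Zs \<sigma> m"
        using IH by simp
      moreover have "0 \<le> (1 + 2*\<sigma>) ^ m"
        using assms by simp
      ultimately show "0 \<le> Zs \<sigma> m"
        by linarith
    qed
    have "(1 + 2*\<sigma>) ^ Suc n \<le> (1 + 2*\<sigma>) * Zs \<sigma> n"
      using IH[of n] assms by (simp add: mult_left_mono)
    also have "\<dots> \<le> 1 + (1 + \<sigma>) * Zs \<sigma> n + \<sigma> * ((\<Sum>m<n. Zs \<sigma> m) + Zs \<sigma> n)"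
      using earlier_nonneg assms by (simp add: algebra_simps)
    also have "\<dots> = Zs \<sigma> (Suc n)"
      by (simp add: lessThan_Suc_atMost[symmetric])
    finally show ?thesis
      using Suc by simp
  qed
qed

lemma exp_lag_moment_mono:
  fixes u w :: real
  assumes "0 \<le> u" "u \<le> w"
  shows "1 - (1 + u) * exp (-u) \<le> 1 - (1 + w) * exp (-w)"
proof (rule DERIV_nonneg_imp_nondecreasing[OF assms(2)])
  fix y :: real assume "u \<le> y"
  have "((\<lambda>y. 1 - (1 + y) * exp (-y)) has_real_derivative y * exp (-y)) (at y)"
    by (auto intro!: derivative_eq_intros simp: algebra_simps)
  then show "\<exists>d. ((\<lambda>y. 1 - (1 + y) * exp (-y)) has_real_derivative d) (at y) \<and> 0 \<le> d"
    using assms \<open>u \<le> y\<close> by auto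
qed

lemma has_integral_exp_lag:
  fixes a t :: real
  assumes "a \<le> t"
  shows "((\<lambda>s. exp (-(t - s)) * (t - s)) has_integral 1 - (1 + (t - a)) * exp (-(t - a))) {a..t}"
proof -
  have "((\<lambda>s. exp (-(t - s)) * (t - s)) has_integral
      (1 + t - t) * exp (-(t - t)) - (1 + t - a) * exp (-(t - a))) {a..t}"
  proof (rule fundamental_theorem_of_calculus[OF assms])
    fix s assume "s \<in> {a..t}"
    have "((\<lambda>s. (1 + t - s) * exp (-(t - s))) has_real_derivative exp (-(t - s)) * (t - s)) (at s)"
      by (auto intro!: derivative_eq_intros simp: algebra_simps)
    then show "((\<lambda>s. (1 + t - s) * exp (-(t - s))) has_vector_derivative exp (-(t - s)) * (t - s))
        (at s within {a..t})"
      by (simp add: has_real_derivative_iff_has_vector_derivative has_vector_derivative_at_within)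
  qed
  then show ?thesis
    by (simp add: algebra_simps)
qed

lemma integral_exp_lag_integral_le:
  fixes f :: "real \<Rightarrow> real"
  assumes "a \<le> t" "0 \<le> C" and f_le: "\<And>r. r \<in> {a..t} \<Longrightarrow> f r \<le> C"
  shows "integral {a..t} (\<lambda>s. exp (-(t - s)) * integral {s..t} f)
    \<le> C * (1 - (1 + (t - a)) * exp (-(t - a)))"
proof (cases "(\<lambda>s. exp (-(t - s)) * integral {s..t} f) integrable_on {a..t}")
  case True
  have inner: "integral {s..t} f \<le> C * (t - s)" if "s \<in> {a..t}" for s
  proof (cases "f integrable_on {s..t}")
    case True
    then have "integral {s..t} f \<le> integral {s..t} (\<lambda>_. C)"
      using f_le that by (intro integral_le) auto
    then show ?thesis
      using that by (simp add: mult.commute)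
  next
    case False
    then show ?thesis
      using that \<open>0 \<le> C\<close> by (simp add: not_integrable_integral)
  qed
  have "integral {a..t} (\<lambda>s. exp (-(t - s)) * integral {s..t} f)
      \<le> integral {a..t} (\<lambda>s. C * (exp (-(t - s)) * (t - s)))"
  proof (rule integral_le[OF True])
    show "(\<lambda>s. C * (exp (-(t - s)) * (t - s))) integrable_on {a..t}"
      using has_integral_mult_right[OF has_integral_exp_lag[OF \<open>a \<le> t\<close>]]
      by (rule has_integral_integrable)
    fix s assume "s \<in> {a..t}"
    then show "exp (-(t - s)) * integral {s..t} f \<le> C * (exp (-(t - s)) * (t - s))"
      using mult_left_mono[OF inner[of s], of "exp (-(t - s))"] by (simp add: algebra_simps)
  qed
  also have "\<dots> = C * (1 - (1 + (t - a)) * exp (-(t - a)))"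
    using has_integral_mult_right[OF has_integral_exp_lag[OF \<open>a \<le> t\<close>]]
    by (rule integral_unique)
  finally show ?thesis .
next
  case False
  have "0 \<le> 1 - (1 + (t - a)) * exp (-(t - a))"
    using exp_lag_moment_mono[of 0 "t - a"] \<open>a \<le> t\<close> by simp
  then show ?thesis
    using False \<open>0 \<le> C\<close> by (simp add: not_integrable_integral)
qed

lemma Gf_le:
  fixes v :: "nat \<Rightarrow> real \<Rightarrow> real^'d"
  assumes "0 \<le> t" "t \<le> 2*\<tau>" "0 \<le> \<beta>" "0 \<le> C"
    and "dv N v t \<le> A" and maxacc_le: "\<And>r. r \<in> {0..t} \<Longrightarrow> maxacc N v r \<le> C"
  shows "Gf N \<tau> \<beta> v t \<le> A + \<beta> * C * (1 - (1 + 2*\<tau>) * exp (-(2*\<tau>)))"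
proof -
  define a where "a = max 0 (t - 2*\<tau>)"
  have a: "a \<le> t" "0 \<le> t - a" "t - a \<le> 2*\<tau>"
    using assms(1,2) unfolding a_def by auto
  have "integral {a..t} (\<lambda>s. exp (-(t - s)) * integral {s..t} (maxacc N v))
      \<le> C * (1 - (1 + (t - a)) * exp (-(t - a)))"
    using a assms maxacc_le unfolding a_def by (intro integral_exp_lag_integral_le) auto
  also have "\<dots> \<le> C * (1 - (1 + 2*\<tau>) * exp (-(2*\<tau>)))"
    using a \<open>0 \<le> C\<close> by (intro mult_left_mono exp_lag_moment_mono) auto
  finally have "\<beta> * integral {a..t} (\<lambda>s. exp (-(t - s)) * integral {s..t} (maxacc N v))
      \<le> \<beta> * C * (1 - (1 + 2*\<tau>) * exp (-(2*\<tau>)))"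
    using \<open>0 \<le> \<beta>\<close> by (simp add: mult_left_mono mult.assoc)
  then show ?thesis
    using \<open>dv N v t \<le> A\<close> unfolding Gf_def a_def by linarith
qed

locale delayed_CS =
  fixes N :: nat and \<sigma> \<tau> :: real and \<psi> :: "real \<Rightarrow> real" and x v :: "nat \<Rightarrow> real \<Rightarrow> real^'d"
  assumes N_ge_2: "2 \<le> N"
    and sigma_nonneg: "0 \<le> \<sigma>" and sigma_le_tau: "\<sigma> \<le> \<tau>"
    and psi_nonneg: "\<And>r. 0 \<le> r \<Longrightarrow> 0 \<le> \<psi> r" and psi_le_1: "\<And>r. 0 \<le> r \<Longrightarrow> \<psi> r \<le> 1"
    and v_ode: "\<And>i t. i \<in> {1..N} \<Longrightarrow> t > 0 \<Longrightarrow>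
      (v i has_vector_derivative
         (\<Sum>j\<in>{1..N} - {i}. aw N \<psi> \<sigma> \<tau> x i j t *\<^sub>R (v j (t - \<tau>) - v i (t - \<sigma>)))) (at t)"
    and v_C1: "\<And>i. i \<in> {1..N} \<Longrightarrow> \<exists>v'. continuous_on {0..} v' \<and>
      (\<forall>t\<ge>0. (v i has_vector_derivative v' t) (at t within {0..}))"
begin

definition force :: "nat \<Rightarrow> real \<Rightarrow> real^'d" where
  "force i t = (\<Sum>j\<in>{1..N} - {i}. aw N \<psi> \<sigma> \<tau> x i j t *\<^sub>R (v j (t - \<tau>) - v i (t - \<sigma>)))"

lemma has_vector_derivative_force:
  "i \<in> {1..N} \<Longrightarrow> 0 < t \<Longrightarrow> (v i has_vector_derivative force i t) (at t)"
  unfolding force_def by (rule v_ode)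

lemma v_continuous:
  assumes "i \<in> {1..N}"
  shows "continuous_on {0..} (v i)"
proof -
  obtain v' where "\<forall>t\<ge>0. (v i has_vector_derivative v' t) (at t within {0..})"
    using v_C1[OF assms] by blast
  then show ?thesis
    by (intro continuous_on_vector_derivative) auto
qed

lemma aw_nonneg: "0 \<le> aw N \<psi> \<sigma> \<tau> x i j t"
  using N_ge_2 psi_nonneg unfolding aw_def by simp

lemma sum_aw_le_1:
  assumes "i \<in> {1..N}"
  shows "(\<Sum>j\<in>{1..N} - {i}. aw N \<psi> \<sigma> \<tau> x i j t) \<le> 1"
proof -
  have "(\<Sum>j\<in>{1..N} - {i}. aw N \<psi> \<sigma> \<tau> x i j t) \<le> (\<Sum>j\<in>{1..N} - {i}. 1 / (real N - 1))"
    using N_ge_2 psi_le_1 unfolding aw_def by (intro sum_mono) (simp add: divide_right_mono)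
  also have "\<dots> = 1"
    using assms N_ge_2 by (simp add: of_nat_diff)
  finally show ?thesis .
qed

lemma norm_force_le:
  assumes spread: "spread_le {1..N} v {-\<tau>..T} B" and i: "i \<in> {1..N}" and t: "0 < t" "t \<le> T + \<sigma>"
  shows "norm (force i t) \<le> B"
proof -
  have delays: "t - \<tau> \<in> {-\<tau>..T}" "t - \<sigma> \<in> {-\<tau>..T}"
    using t sigma_nonneg sigma_le_tau by auto
  then have "0 \<le> B"
    using spread i by (intro spread_le_nonneg) auto
  show ?thesis
    unfolding force_def
  proof (rule norm_sum_scaleR_le[OF aw_nonneg sum_aw_le_1[OF i] _ \<open>0 \<le> B\<close>])
    fix j assume "j \<in> {1..N} - {i}"
    then show "norm (v j (t - \<tau>) - v i (t - \<sigma>)) \<le> B"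
      using spread i delays unfolding spread_le_def by blast
  qed
qed

lemma spread_le_power:
  "spread_le {1..N} v {-\<tau>..0} \<Delta> \<Longrightarrow> spread_le {1..N} v {-\<tau>..real k * \<sigma>} ((1 + 2*\<sigma>) ^ k * \<Delta>)"
  using sigma_nonneg sigma_le_tau
  by (intro spread_le_growth[where F = force] v_continuous has_vector_derivative_force norm_force_le)
     auto

lemma maxacc_le:
  assumes spread: "spread_le {1..N} v {-\<tau>..T} B" and "0 < T + \<sigma>" and r: "r \<in> {0..T + \<sigma>}"
  shows "maxacc N v r \<le> B"
proof -
  have "norm (vector_derivative (v i) (at r within {0..})) \<le> B" if i: "i \<in> {1..N}" for i
  proof -
    obtain v' where v'_cont: "continuous_on {0..} v'"
      and v': "\<And>t. 0 \<le> t \<Longrightarrow> (v i has_vector_derivative v' t) (at t within {0..})"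
      using v_C1[OF i] by blast
    have nontrivial: "at t within {0..} \<noteq> bot" if "0 \<le> t" for t :: real
    proof -
      have "at_right t \<le> at t within {0..}"
        using that by (intro at_le) auto
      then show ?thesis
        using trivial_limit_at_right_real[of t] by (auto simp: bot_unique)
    qed
    have "v' t = force i t" if "0 < t" for t
    proof (rule vector_derivative_unique_within[OF nontrivial v'])
      show "(v i has_vector_derivative force i t) (at t within {0..})"
        using has_vector_derivative_force[OF i that] by (rule has_vector_derivative_at_within)
    qed (use that in auto)
    then have "\<forall>t\<in>{0<..T + \<sigma>}. norm (v' t) \<le> B"
      using norm_force_le[OF spread i] by auto
    \<comment> \<open>The equation says nothing at r = 0; there the bound comes from continuity of v'.\<close>
    then have "norm (v' r) \<le> B"
      using continuous_on_subset[OF v'_cont] \<open>0 < T + \<sigma>\<close> r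
      by (intro continuous_on_closure_norm_le[of "{0<..T + \<sigma>}"]) auto
    then show ?thesis
      using vector_derivative_within[OF nontrivial v'] r by simp
  qed
  then show ?thesis
    unfolding maxacc_def using N_ge_2 by (subst Max_le_iff) auto
qed

lemma spread_le_Zs:
  assumes spread0: "spread_le {1..N} v {-\<tau>..0} \<Delta>"
  shows "spread_le {1..N} v {-\<tau>..real k * \<sigma>} (Zs \<sigma> k * \<Delta>)"
proof -
  have "0 \<le> \<Delta>"
    using N_ge_2 sigma_nonneg sigma_le_tau by (intro spread_le_nonneg[OF spread0, of 1 0]) auto
  then have "(1 + 2*\<sigma>) ^ k * \<Delta> \<le> Zs \<sigma> k * \<Delta>"
    using power_le_Zs[OF sigma_nonneg] by (intro mult_right_mono)
  then show ?thesis
    using spread_le_power[OF spread0, of k] unfolding spread_le_def by (meson order_trans)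
qed

lemma Gf_le_Zs:
  assumes spread0: "spread_le {1..N} v {-\<tau>..0} \<Delta>" and K: "2*\<tau> \<le> real K * \<sigma>"
    and "0 \<le> \<beta>" and t: "t \<in> {0..2*\<tau>}"
  shows "Gf N \<tau> \<beta> v t \<le> (Zs \<sigma> K + Zs \<sigma> (K - 1) * \<beta> * (1 - (1 + 2*\<tau>) * exp (-(2*\<tau>)))) * \<Delta>"
proof -
  note spread = spread_le_Zs[OF spread0]
  have dv: "dv N v t \<le> Zs \<sigma> K * \<Delta>"
    using t K N_ge_2 by (intro dv_le_spread[OF spread[of K]]) auto
  show ?thesis
  proof (cases "\<tau> = 0")
    case True
    then show ?thesis
      using t dv unfolding Gf_def by simp
  next
    case False
    then obtain k where Kk: "K = Suc k"
      using K sigma_nonneg sigma_le_tau by (cases K) auto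
    have cover: "0 < real k * \<sigma> + \<sigma>" "{0..t} \<subseteq> {0..real k * \<sigma> + \<sigma>}"
      using K t sigma_nonneg sigma_le_tau False unfolding Kk by (auto simp: algebra_simps)
    have "0 \<le> Zs \<sigma> k * \<Delta>"
      using N_ge_2 sigma_nonneg sigma_le_tau by (intro spread_le_nonneg[OF spread[of k], of 1 0]) auto
    moreover have "maxacc N v r \<le> Zs \<sigma> k * \<Delta>" if "r \<in> {0..t}" for r
      using maxacc_le[OF spread[of k] cover(1)] cover(2) that by blast
    ultimately have "Gf N \<tau> \<beta> v t
        \<le> Zs \<sigma> K * \<Delta> + \<beta> * (Zs \<sigma> k * \<Delta>) * (1 - (1 + 2*\<tau>) * exp (-(2*\<tau>)))"
      using t \<open>0 \<le> \<beta>\<close> dv by (intro Gf_le) auto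
    then show ?thesis
      unfolding Kk by (simp add: algebra_simps)
  qed
qed

end

theorem lemma4p2:
  fixes N K :: nat and \<sigma> \<tau> \<beta> :: real and \<psi> :: "real \<Rightarrow> real"
    and x0 v0 x v :: "nat \<Rightarrow> real \<Rightarrow> real^'d"
  assumes N: "N \<ge> 2"
    and sig: "0 \<le> \<sigma>" "\<sigma> \<le> \<tau>"
    and psi_cont: "continuous_on {0..} \<psi>"
    and psi_mono: "\<And>r s. 0 \<le> r \<Longrightarrow> r \<le> s \<Longrightarrow> \<psi> s \<le> \<psi> r"
    and psi_pos: "\<And>r. 0 \<le> r \<Longrightarrow> \<psi> r > 0"
    and psi_le1: "\<And>r. 0 \<le> r \<Longrightarrow> \<psi> r \<le> 1"
    and init_x: "\<And>i t. i \<in> {1..N} \<Longrightarrow> t \<in> {-\<tau>..0} \<Longrightarrow>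
                   (x0 i has_vector_derivative v0 i t) (at t within {-\<tau>..0})"
    and init_v: "\<And>i. i \<in> {1..N} \<Longrightarrow> continuous_on {-\<tau>..0} (v0 i)"
    and x_init: "\<And>i t. i \<in> {1..N} \<Longrightarrow> t \<in> {-\<tau>..0} \<Longrightarrow> x i t = x0 i t"
    and v_init: "\<And>i t. i \<in> {1..N} \<Longrightarrow> t \<in> {-\<tau>..0} \<Longrightarrow> v i t = v0 i t"
    and x_cont: "\<And>i. i \<in> {1..N} \<Longrightarrow> continuous_on {-\<tau>..} (x i)"
    and x_ode: "\<And>i t. i \<in> {1..N} \<Longrightarrow> t > 0 \<Longrightarrow> (x i has_vector_derivative v i t) (at t)"
    and v_ode: "\<And>i t. i \<in> {1..N} \<Longrightarrow> t > 0 \<Longrightarrow>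
        (v i has_vector_derivative
           (\<Sum>j\<in>{1..N} - {i}. aw N \<psi> \<sigma> \<tau> x i j t *\<^sub>R (v j (t - \<tau>) - v i (t - \<sigma>)))) (at t)"
    and v_C1: "\<And>i. i \<in> {1..N} \<Longrightarrow> \<exists>v'. continuous_on {0..} v' \<and>
        (\<forall>t\<ge>0. (v i has_vector_derivative v' t) (at t within {0..}))"
    and beta: "\<beta> > 0"
    and K: "real K * \<sigma> \<ge> 2 * \<tau>" "\<And>k. k < K \<Longrightarrow> real k * \<sigma> < 2 * \<tau>"
  shows "\<forall>t\<in>{0..2*\<tau>}. Gf N \<tau> \<beta> v t
           \<le> (Zs \<sigma> K + Zs \<sigma> (K - 1) * \<beta> * (1 - (1 + 2*\<tau>) * exp (-(2*\<tau>)))) * Delta0 N \<tau> v0"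
proof -
  interpret delayed_CS N \<sigma> \<tau> \<psi> x v
    using N sig psi_pos psi_le1 v_ode v_C1 by unfold_locales (auto intro: less_imp_le)
  have "spread_le {1..N} v {-\<tau>..0} (Delta0 N \<tau> v0)"
    using spread_le_Delta0[of N \<tau> v0] init_v v_init unfolding spread_le_def by simp
  then show ?thesis
    using Gf_le_Zs[OF _ K(1) less_imp_le[OF beta]] by blast
qed

end
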